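(* Let $P$ be a pattern on $n$ vertices, $S$ a schedule for $P$, and $L'$ the reduced relation set (one chosen pair $(S[c_k],S[k])$ for each $k$ that has an incoming pair in $L$). Fix $0\le m\le n-1$ and let $x_0,\dots,x_m$ be independent random variables uniformly distributed on $(0,1)$. For $i\le m$ let $z_i$ be the number of indices $j\le m$ such that there is a chain $i=j_0,j_1,\dots,j_r=j$ ($r\ge 0$) with $c_{j_{t+1}}=j_t$ for all $t<r$ (so $z_i$ counts $i$ itself). Then $$\Pr\big[x_k<x_{c_k}\text{ for every }k\le m\text{ for which }c_k\text{ is defined}\big]=\prod_{i=0}^{m}\frac{1}{z_i}.$$ Moreover, for $m=n-1$ this probability equals $1/|\mathrm{Aut}(P)|$.
   Context: A pattern $P$ is a finite simple connected graph on $n$ labeled vertices; $\mathrm{Aut}(P)$ is its automorphism group (bijections $V(P)\to V(P)$ preserving adjacency and non-adjacency). A schedule for $P$ is a sequence $S=(S[0],\dots,S[n-1])$ listing every vertex of $P$ exactly once such that each $S[k]$ with $k\ge 1$ is adjacent in $P$ to some $S[j]$ with $j<k$. Restriction set: $L=\{(S[i],x(S[i])) : 0\le i<n,\ x\in\mathrm{Aut}(P),\ x(S[j])=S[j]\text{ for all } j<i,\ x(S[i])\ne S[i]\}$; every pair in $L$ has the form $(S[a],S[b])$ with $a<b$. Reduced relation set $L'$: for each $k$ such that some $(S[z],S[k])\in L$, let $c_k$ be the largest such $z$ (so $c_k<k$); $L'=\{(S[c_k],S[k])\}$. For $k$ with no such pair, $c_k$ is undefined. *)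

theory Defs
  imports "HOL-Probability.Probability"
begin

definition is_pattern :: "(nat \<Rightarrow> nat \<Rightarrow> bool) \<Rightarrow> nat \<Rightarrow> bool" where
  "is_pattern E n \<longleftrightarrow>
     (\<forall>u v. E u v \<longrightarrow> u < n \<and> v < n) \<and>
     (\<forall>u v. E u v \<longrightarrow> E v u) \<and>
     (\<forall>u. \<not> E u u) \<and>
     (\<forall>u<n. \<forall>v<n. E\<^sup>*\<^sup>* u v)"

definition aut :: "(nat \<Rightarrow> nat \<Rightarrow> bool) \<Rightarrow> nat \<Rightarrow> (nat \<Rightarrow> nat) set" where
  "aut E n = {f. bij_betw f {..<n} {..<n} \<and> (\<forall>x. n \<le> x \<longrightarrow> f x = x) \<and>
                 (\<forall>u<n. \<forall>v<n. E (f u) (f v) \<longleftrightarrow> E u v)}"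

definition is_schedule :: "(nat \<Rightarrow> nat \<Rightarrow> bool) \<Rightarrow> nat \<Rightarrow> nat list \<Rightarrow> bool" where
  "is_schedule E n S \<longleftrightarrow> length S = n \<and> distinct S \<and> set S = {..<n} \<and>
     (\<forall>k. 0 < k \<and> k < n \<longrightarrow> (\<exists>j<k. E (S ! j) (S ! k)))"

definition restr_set :: "(nat \<Rightarrow> nat \<Rightarrow> bool) \<Rightarrow> nat \<Rightarrow> nat list \<Rightarrow> (nat \<times> nat) set" where
  "restr_set E n S = {(S ! i, f (S ! i)) | i f. i < n \<and> f \<in> aut E n \<and>
       (\<forall>j<i. f (S ! j) = S ! j) \<and> f (S ! i) \<noteq> S ! i}"

definition has_c :: "(nat \<Rightarrow> nat \<Rightarrow> bool) \<Rightarrow> nat \<Rightarrow> nat list \<Rightarrow> nat \<Rightarrow> bool" where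
  "has_c E n S k \<longleftrightarrow> k < n \<and> (\<exists>z<n. (S ! z, S ! k) \<in> restr_set E n S)"

definition cidx :: "(nat \<Rightarrow> nat \<Rightarrow> bool) \<Rightarrow> nat \<Rightarrow> nat list \<Rightarrow> nat \<Rightarrow> nat" where
  "cidx E n S k = Max {z. z < n \<and> (S ! z, S ! k) \<in> restr_set E n S}"

definition reduced_set :: "(nat \<Rightarrow> nat \<Rightarrow> bool) \<Rightarrow> nat \<Rightarrow> nat list \<Rightarrow> (nat \<times> nat) set" where
  "reduced_set E n S = {(S ! cidx E n S k, S ! k) | k. has_c E n S k}"

definition cparent :: "(nat \<Rightarrow> nat \<Rightarrow> bool) \<Rightarrow> nat \<Rightarrow> nat list \<Rightarrow> (nat \<times> nat) set" where
  "cparent E n S = {(cidx E n S k, k) | k. has_c E n S k}"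

definition zcount :: "(nat \<Rightarrow> nat \<Rightarrow> bool) \<Rightarrow> nat \<Rightarrow> nat list \<Rightarrow> nat \<Rightarrow> nat \<Rightarrow> nat" where
  "zcount E n S m i = card {j. j \<le> m \<and> (i, j) \<in> (cparent E n S)\<^sup>*}"

end

(* Integrating out the coordinates from the last index downwards, the constraint x_k < x_(c_k) turns
   a factor x_k^a into x_(c_k)^(a+1) / (a+1): the subtree rooted at k is absorbed into the exponent of
   its parent, and in the end every index i contributes 1 / z_i, z_i being the size of its subtree in
   the forest of the parent map c.
   For m = n - 1, |Aut P| is the product over i of the sizes of the orbits of S[i] under the pointwise
   stabilizer of S[0], ..., S[i-1]; this orbit consists exactly of the S[k] with k in the subtree of i,
   so it has z_i elements. *)
theory Submission
  imports Defs "HOL-Combinatorics.Permutations"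
begin

section \<open>Independent uniform variables ordered along a forest\<close>

lemma nn_integral_power_Ioo:
  fixes t :: real
  assumes "0 \<le> t"
  shows "(\<integral>\<^sup>+ y. ennreal (y ^ a) * indicator {0<..<t} y \<partial>lborel) = ennreal (t ^ Suc a / Suc a)"
proof -
  have "((\<lambda>y. y ^ a) has_integral (t ^ Suc a / Suc a - 0 ^ Suc a / Suc a)) {0..t}"
  proof (rule fundamental_theorem_of_calculus)
    fix x :: real
    have "((\<lambda>y. y ^ Suc a / Suc a) has_real_derivative x ^ a) (at x)"
      by (rule derivative_eq_intros refl | simp)+
    then show "((\<lambda>y. y ^ Suc a / Suc a) has_vector_derivative x ^ a) (at x within {0..t})"
      using has_real_derivative_iff_has_vector_derivative has_vector_derivative_at_within by blast
  qed (use assms in simp)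
  then have "((\<lambda>y. y ^ a) has_integral (t ^ Suc a / Suc a)) {0<..<t}"
    by (simp add: has_integral_Icc_iff_Ioo)
  from nn_integral_has_integral_lebesgue[OF _ this] show ?thesis
    by (simp add: mult.commute nn_integral_set_ennreal)
qed

abbreviation uniform01 :: "real measure" where
  "uniform01 \<equiv> uniform_measure lborel {0<..<1}"

lemma prob_space_uniform01: "prob_space uniform01"
  by (rule prob_space_uniform_measure) auto

lemma AE_uniform01: "AE y in uniform01. y \<in> {0<..<1}"
  by (rule AE_uniform_measureI) auto

lemma nn_integral_uniform01_power_below:
  fixes t :: real
  assumes "0 < t" "t \<le> 1"
  shows "(\<integral>\<^sup>+ y. ennreal (y ^ a) * indicator {..<t} y \<partial>uniform01) = ennreal (t ^ Suc a / Suc a)"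
proof -
  have "(\<integral>\<^sup>+ y. ennreal (y ^ a) * indicator {..<t} y \<partial>uniform01)
      = (\<integral>\<^sup>+ y. ennreal (y ^ a) * indicator {..<t} y * indicator {0<..<1} y \<partial>lborel)"
    by (subst nn_integral_uniform_measure) (auto simp: divide_ennreal_def)
  also have "\<dots> = (\<integral>\<^sup>+ y. ennreal (y ^ a) * indicator {0<..<t} y \<partial>lborel)"
    using assms by (intro nn_integral_cong) (auto split: split_indicator)
  finally show ?thesis
    using nn_integral_power_Ioo assms by simp
qed

lemma nn_integral_uniform01_power:
  "(\<integral>\<^sup>+ y. ennreal (y ^ a) \<partial>uniform01) = ennreal (1 / Suc a)"
proof -
  have "AE y in uniform01. ennreal (y ^ a) = ennreal (y ^ a) * indicator {..<1} y"
    using AE_uniform01 by eventually_elim simp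
  then have "(\<integral>\<^sup>+ y. ennreal (y ^ a) \<partial>uniform01)
      = (\<integral>\<^sup>+ y. ennreal (y ^ a) * indicator {..<1} y \<partial>uniform01)"
    by (rule nn_integral_cong_AE)
  then show ?thesis
    using nn_integral_uniform01_power_below[of 1 a] by simp
qed

lemma AE_PiM_uniform01: "AE x in PiM I (\<lambda>_. uniform01). \<forall>i\<in>I. x i \<in> {0<..<1}" if "finite I"
  using that by (intro eventually_ball_finite ballI AE_PiM_component prob_space_uniform01 AE_uniform01)

locale decreasing_parent =
  fixes has_parent :: "nat \<Rightarrow> bool" and parent :: "nat \<Rightarrow> nat"
  assumes parent_less: "has_parent k \<Longrightarrow> parent k < k"
begin

definition parent_rel :: "(nat \<times> nat) set" where
  "parent_rel = {(parent k, k) | k. has_parent k}"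

definition subtree_weight :: "(nat \<Rightarrow> nat) \<Rightarrow> nat \<Rightarrow> nat \<Rightarrow> nat" where
  "subtree_weight a m i = (\<Sum>j \<in> {j. j < m \<and> (i, j) \<in> parent_rel\<^sup>*}. a j + 1)"

text \<open>The exponent \<open>a i\<close> records the subtrees below \<open>i\<close> that have already been integrated
  out; the probability of the event itself is the integral of \<open>order_density (\<lambda>_. 0)\<close>.\<close>
definition order_density :: "(nat \<Rightarrow> nat) \<Rightarrow> nat \<Rightarrow> (nat \<Rightarrow> real) \<Rightarrow> ennreal" where
  "order_density a m x =
     (\<Prod>i<m. ennreal (x i ^ a i) * (if has_parent i \<longrightarrow> x i < x (parent i) then 1 else 0))"

definition fold_into_parent :: "(nat \<Rightarrow> nat) \<Rightarrow> nat \<Rightarrow> nat \<Rightarrow> nat" where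
  "fold_into_parent a m = (if has_parent m then a(parent m := a (parent m) + a m + 1) else a)"

lemma descendant_le: "(i, j) \<in> parent_rel\<^sup>* \<Longrightarrow> i \<le> j"
  by (induction rule: rtrancl_induct) (auto simp: parent_rel_def dest: parent_less)

lemma descendant_iff_parent_descendant:
  "i \<noteq> m \<Longrightarrow> (i, m) \<in> parent_rel\<^sup>* \<longleftrightarrow> has_parent m \<and> (i, parent m) \<in> parent_rel\<^sup>*"
  by (auto simp: parent_rel_def elim: rtranclE intro: rtrancl_into_rtrancl)

lemma subtree_weight_Suc_self: "subtree_weight a (Suc m) m = a m + 1"
proof -
  have "{j. j < Suc m \<and> (m, j) \<in> parent_rel\<^sup>*} = {m}"
    using descendant_le by fastforce
  then show ?thesis by (simp add: subtree_weight_def)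
qed

lemma subtree_weight_Suc:
  assumes "i < m"
  shows "subtree_weight a (Suc m) i = subtree_weight (fold_into_parent a m) m i"
proof -
  define D where "D = {j. j < m \<and> (i, j) \<in> parent_rel\<^sup>*}"
  have "finite D" by (simp add: D_def)
  have "{j. j < Suc m \<and> (i, j) \<in> parent_rel\<^sup>*} = D \<union> (if (i, m) \<in> parent_rel\<^sup>* then {m} else {})"
    by (auto simp: D_def less_Suc_eq)
  then have "subtree_weight a (Suc m) i
      = (\<Sum>j\<in>D. a j + 1) + (if (i, m) \<in> parent_rel\<^sup>* then a m + 1 else 0)"
    using \<open>finite D\<close> by (simp add: subtree_weight_def D_def)
  also have "(i, m) \<in> parent_rel\<^sup>* \<longleftrightarrow> has_parent m \<and> parent m \<in> D"
    using assms descendant_iff_parent_descendant[of i m] parent_less[of m] by (auto simp: D_def)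
  also have "(\<Sum>j\<in>D. a j + 1) + (if has_parent m \<and> parent m \<in> D then a m + 1 else 0)
      = (\<Sum>j\<in>D. (a j + 1) + (if has_parent m \<and> j = parent m then a m + 1 else 0))"
    unfolding sum.distrib using \<open>finite D\<close> by (cases "has_parent m") (simp_all add: sum.delta')
  also have "\<dots> = (\<Sum>j\<in>D. fold_into_parent a m j + 1)"
    by (intro sum.cong) (auto simp: fold_into_parent_def)
  finally show ?thesis by (simp add: subtree_weight_def D_def)
qed

lemma order_density_measurable:
  "order_density a m \<in> borel_measurable (PiM {..<m} (\<lambda>_. uniform01))"
  unfolding order_density_def
proof (intro borel_measurable_prod_ennreal)
  fix i assume i: "i \<in> {..<m}"
  show "(\<lambda>x. ennreal (x i ^ a i) * (if has_parent i \<longrightarrow> x i < x (parent i) then 1 else 0))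
      \<in> borel_measurable (PiM {..<m} (\<lambda>_. uniform01))"
  proof (cases "has_parent i")
    case True
    then have "parent i \<in> {..<m}" using i parent_less[of i] by simp
    with i True show ?thesis by simp measurable
  qed (use i in simp)
qed

lemma order_density_fun_upd:
  "order_density a (Suc m) (x(m := y))
     = order_density a m x * (ennreal (y ^ a m) * (if has_parent m \<longrightarrow> y < x (parent m) then 1 else 0))"
proof -
  have "order_density a m (x(m := y)) = order_density a m x"
    unfolding order_density_def by (intro prod.cong refl) (use parent_less in fastforce)
  then show ?thesis
    using parent_less[of m] by (auto simp: order_density_def)
qed

lemma order_density_fold_into_parent:
  assumes "has_parent m" and "0 \<le> x (parent m)"
  shows "order_density (fold_into_parent a m) m x
           = order_density a m x * ennreal (x (parent m) ^ Suc (a m))"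
proof -
  let ?p = "parent m"
  have "?p \<in> {..<m}" using parent_less assms(1) by simp
  have "order_density (fold_into_parent a m) m x
      = (\<Prod>i<m. ennreal (x i ^ a i) * (if has_parent i \<longrightarrow> x i < x (parent i) then 1 else 0)
                 * (if i = ?p then ennreal (x ?p ^ Suc (a m)) else 1))"
    unfolding order_density_def using assms
    by (intro prod.cong) (auto simp: fold_into_parent_def power_add ennreal_mult mult_ac)
  also have "\<dots> = order_density a m x * ennreal (x ?p ^ Suc (a m))"
    unfolding order_density_def prod.distrib using \<open>?p \<in> {..<m}\<close> by simp
  finally show ?thesis .
qed

lemma nn_integral_order_density_last:
  assumes x: "\<forall>i<m. x i \<in> {0<..<1}"
  shows "(\<integral>\<^sup>+ y. order_density a (Suc m) (x(m := y)) \<partial>uniform01)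
           = order_density (fold_into_parent a m) m x * ennreal (1 / Suc (a m))"
proof -
  have "(\<integral>\<^sup>+ y. order_density a (Suc m) (x(m := y)) \<partial>uniform01)
      = order_density a m x
        * (\<integral>\<^sup>+ y. ennreal (y ^ a m) * (if has_parent m \<longrightarrow> y < x (parent m) then 1 else 0) \<partial>uniform01)"
    unfolding order_density_fun_upd by (rule nn_integral_cmult) measurable
  also have "\<dots> = order_density (fold_into_parent a m) m x * ennreal (1 / Suc (a m))"
  proof (cases "has_parent m")
    case True
    then have xp: "x (parent m) \<in> {0<..<1}" using x parent_less by blast
    have "(\<integral>\<^sup>+ y. ennreal (y ^ a m) * (if has_parent m \<longrightarrow> y < x (parent m) then 1 else 0) \<partial>uniform01)
        = (\<integral>\<^sup>+ y. ennreal (y ^ a m) * indicator {..<x (parent m)} y \<partial>uniform01)"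
      using True by (intro nn_integral_cong) (simp split: split_indicator)
    also have "\<dots> = ennreal (x (parent m) ^ Suc (a m)) * ennreal (1 / Suc (a m))"
      using xp by (simp add: nn_integral_uniform01_power_below ennreal_mult[symmetric])
    finally show ?thesis
      using order_density_fold_into_parent[OF True, of x a] xp by (simp add: mult_ac)
  next
    case False
    then show ?thesis by (simp add: fold_into_parent_def nn_integral_uniform01_power)
  qed
  finally show ?thesis .
qed

lemma nn_integral_order_density:
  "(\<integral>\<^sup>+ x. order_density a m x \<partial>PiM {..<m} (\<lambda>_. uniform01))
     = ennreal (\<Prod>i<m. 1 / real (subtree_weight a m i))"
proof (induction m arbitrary: a)
  case 0
  interpret prob_space "PiM {} (\<lambda>_::nat. uniform01)"
    by (intro prob_space_PiM prob_space_uniform01)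
  show ?case by (simp add: order_density_def emeasure_space_1)
next
  case (Suc m)
  let ?a' = "fold_into_parent a m" and ?P = "PiM {..<m} (\<lambda>_. uniform01)"
  interpret product_sigma_finite "\<lambda>_::nat. uniform01"
    by (simp add: product_sigma_finite_def prob_space_imp_sigma_finite prob_space_uniform01)
  have "(\<integral>\<^sup>+ x. order_density a (Suc m) x \<partial>PiM {..<Suc m} (\<lambda>_. uniform01))
      = (\<integral>\<^sup>+ x. (\<integral>\<^sup>+ y. order_density a (Suc m) (x(m := y)) \<partial>uniform01) \<partial>?P)"
    using product_nn_integral_insert[of "{..<m}" m "order_density a (Suc m)"]
      order_density_measurable[of a "Suc m"]
    by (simp add: lessThan_Suc)
  also have "\<dots> = (\<integral>\<^sup>+ x. order_density ?a' m x * ennreal (1 / Suc (a m)) \<partial>?P)"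
    using AE_PiM_uniform01[of "{..<m}"]
    by (intro nn_integral_cong_AE) (auto elim!: eventually_mono simp: nn_integral_order_density_last)
  also have "\<dots> = (\<integral>\<^sup>+ x. order_density ?a' m x \<partial>?P) * ennreal (1 / Suc (a m))"
    by (rule nn_integral_multc) (rule order_density_measurable)
  also have "\<dots> = ennreal ((\<Prod>i<m. 1 / real (subtree_weight ?a' m i)) * (1 / Suc (a m)))"
    unfolding Suc.IH by (rule ennreal_mult[symmetric]) (auto intro: prod_nonneg)
  also have "(\<Prod>i<m. 1 / real (subtree_weight ?a' m i)) * (1 / Suc (a m))
      = (\<Prod>i<Suc m. 1 / real (subtree_weight a (Suc m) i))"
    by (simp add: subtree_weight_Suc subtree_weight_Suc_self)
  finally show ?case .
qed

lemma prob_below_parents: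
  fixes m :: nat
  defines "P \<equiv> PiM {..<m} (\<lambda>_. uniform01)"
  shows "measure P {x \<in> space P. \<forall>k<m. has_parent k \<longrightarrow> x k < x (parent k)}
           = (\<Prod>i<m. 1 / real (card {j. j < m \<and> (i, j) \<in> parent_rel\<^sup>*}))"
proof -
  define A where "A = {x \<in> space P. \<forall>k<m. has_parent k \<longrightarrow> x k < x (parent k)}"
  have indicator_A: "indicator A x = order_density (\<lambda>_. 0) m x" if "x \<in> space P" for x
    using that by (auto simp: A_def order_density_def prod_zero_iff split: split_indicator intro!: prod.neutral)
  have "x \<in> A \<longleftrightarrow> x \<in> space P \<and> order_density (\<lambda>_. 0) m x = 1" for x
    using indicator_A[of x] by (cases "x \<in> space P") (auto simp: A_def indicator_def)
  then have "A = order_density (\<lambda>_. 0) m -` {1} \<inter> space P"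
    by blast
  then have "A \<in> sets P"
    using order_density_measurable unfolding P_def by (simp add: measurable_sets)
  then have "emeasure P A = (\<integral>\<^sup>+ x. order_density (\<lambda>_. 0) m x \<partial>P)"
    by (simp add: nn_integral_indicator[symmetric] indicator_A cong: nn_integral_cong)
  also have "\<dots> = ennreal (\<Prod>i<m. 1 / real (card {j. j < m \<and> (i, j) \<in> parent_rel\<^sup>*}))"
    unfolding P_def nn_integral_order_density by (simp add: subtree_weight_def)
  finally show ?thesis
    unfolding A_def measure_def by (simp add: prod_nonneg)
qed

end

section \<open>Automorphisms and the stabilizer chain of a schedule\<close>

lemma card_eq_card_orbit_mult_card_stabilizer:
  assumes "finite G"
    and comp_closed: "\<And>f g. f \<in> G \<Longrightarrow> g \<in> G \<Longrightarrow> f \<circ> g \<in> G"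
    and inv_closed: "\<And>f. f \<in> G \<Longrightarrow> inv f \<in> G"
    and bij: "\<And>f. f \<in> G \<Longrightarrow> bij f"
  shows "card G = card ((\<lambda>f. f x) ` G) * card {f \<in> G. f x = x}"
proof -
  let ?H = "{f \<in> G. f x = x}"
  have fibre: "card {f \<in> G. f x = v} = card ?H" if "v \<in> (\<lambda>f. f x) ` G" for v
  proof -
    obtain g where g: "g \<in> G" "g x = v" using \<open>v \<in> (\<lambda>f. f x) ` G\<close> by blast
    have "inj g" using bij[OF g(1)] by (rule bij_is_inj)
    have "{f \<in> G. f x = v} = (\<lambda>h. g \<circ> h) ` ?H"
    proof (intro set_eqI iffI)
      fix f assume f: "f \<in> {f \<in> G. f x = v}"
      have "inv g \<circ> f \<in> ?H"
        using f g comp_closed inv_closed \<open>inj g\<close> by (auto simp: inv_f_eq)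
      moreover have "f = g \<circ> (inv g \<circ> f)"
        using bij_is_surj[OF bij[OF g(1)]] by (simp add: fun_eq_iff surj_f_inv_f)
      ultimately show "f \<in> (\<lambda>h. g \<circ> h) ` ?H" by blast
    qed (use g comp_closed in auto)
    moreover have "inj_on (\<lambda>h. g \<circ> h) ?H"
      using \<open>inj g\<close> by (intro inj_onI) (simp add: fun_eq_iff inj_eq)
    ultimately show ?thesis by (simp add: card_image)
  qed
  have "card G = card (\<Union>v \<in> (\<lambda>f. f x) ` G. {f \<in> G. f x = v})"
    by (rule arg_cong[where f = card]) blast
  also have "\<dots> = (\<Sum>v \<in> (\<lambda>f. f x) ` G. card {f \<in> G. f x = v})"
    using \<open>finite G\<close> by (intro card_UN_disjoint) auto
  also have "\<dots> = card ((\<lambda>f. f x) ` G) * card ?H"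
    by (simp add: fibre)
  finally show ?thesis .
qed

lemma aut_iff_permutes:
  "f \<in> aut E n \<longleftrightarrow> f permutes {..<n} \<and> (\<forall>u<n. \<forall>v<n. E (f u) (f v) \<longleftrightarrow> E u v)"
  unfolding aut_def permutes_altdef by (auto simp: subset_eq) (meson not_le)

lemma aut_permutes: "f \<in> aut E n \<Longrightarrow> f permutes {..<n}"
  by (simp add: aut_iff_permutes)

lemma id_in_aut: "id \<in> aut E n"
  by (simp add: aut_iff_permutes permutes_id)

lemma aut_in_range: "f \<in> aut E n \<Longrightarrow> u < n \<Longrightarrow> f u < n"
  using permutes_in_image[OF aut_permutes] by blast

lemma aut_compose: "f \<in> aut E n \<Longrightarrow> g \<in> aut E n \<Longrightarrow> f \<circ> g \<in> aut E n"
  by (auto simp: aut_iff_permutes permutes_compose aut_in_range)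

lemma aut_inv:
  assumes "f \<in> aut E n"
  shows "inv f \<in> aut E n"
proof -
  have f: "f permutes {..<n}" "\<forall>u<n. \<forall>v<n. E (f u) (f v) \<longleftrightarrow> E u v"
    using assms by (simp_all add: aut_iff_permutes)
  have "E (inv f u) (inv f v) \<longleftrightarrow> E u v" if "u < n" "v < n" for u v
  proof -
    have "inv f u < n" "inv f v < n"
      using that permutes_in_image[OF permutes_inv[OF f(1)]] by auto
    then show ?thesis
      using f(2) permutes_inverses(1)[OF f(1)] by metis
  qed
  then show ?thesis
    by (simp add: aut_iff_permutes permutes_inv[OF f(1)])
qed

lemma finite_aut: "finite (aut E n)"
  by (rule finite_subset[of _ "{p. p permutes {..<n}}"]) (auto simp: aut_permutes finite_permutations)

definition prefix_stabilizer :: "(nat \<Rightarrow> nat \<Rightarrow> bool) \<Rightarrow> nat \<Rightarrow> nat list \<Rightarrow> nat \<Rightarrow> (nat \<Rightarrow> nat) set" where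
  "prefix_stabilizer E n S i = {f \<in> aut E n. \<forall>j<i. f (S ! j) = S ! j}"

lemma prefix_stabilizer_0: "prefix_stabilizer E n S 0 = aut E n"
  by (simp add: prefix_stabilizer_def)

lemma prefix_stabilizer_antimono: "i \<le> j \<Longrightarrow> prefix_stabilizer E n S j \<subseteq> prefix_stabilizer E n S i"
  by (auto simp: prefix_stabilizer_def)

lemma prefix_stabilizer_Suc:
  "prefix_stabilizer E n S (Suc i) = {f \<in> prefix_stabilizer E n S i. f (S ! i) = S ! i}"
  by (auto simp: prefix_stabilizer_def less_Suc_eq)

lemma finite_prefix_stabilizer: "finite (prefix_stabilizer E n S i)"
  using finite_aut by (simp add: prefix_stabilizer_def)

lemma prefix_stabilizer_compose:
  "f \<in> prefix_stabilizer E n S i \<Longrightarrow> g \<in> prefix_stabilizer E n S i \<Longrightarrow> f \<circ> g \<in> prefix_stabilizer E n S i"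
  by (simp add: prefix_stabilizer_def aut_compose)

lemma prefix_stabilizer_inv:
  "f \<in> prefix_stabilizer E n S i \<Longrightarrow> inv f \<in> prefix_stabilizer E n S i"
  by (auto simp: prefix_stabilizer_def aut_inv intro: inv_f_eq permutes_inj aut_permutes)

lemma prefix_stabilizer_bij: "f \<in> prefix_stabilizer E n S i \<Longrightarrow> bij f"
  by (auto simp: prefix_stabilizer_def intro: permutes_bij aut_permutes)

lemma card_prefix_stabilizer_Suc:
  "card (prefix_stabilizer E n S i)
     = card ((\<lambda>f. f (S ! i)) ` prefix_stabilizer E n S i) * card (prefix_stabilizer E n S (Suc i))"
  unfolding prefix_stabilizer_Suc
  by (intro card_eq_card_orbit_mult_card_stabilizer finite_prefix_stabilizer
      prefix_stabilizer_compose prefix_stabilizer_inv prefix_stabilizer_bij)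

context
  fixes E n S
  assumes schedule: "is_schedule E n S"
begin

lemma schedule_nth_less: "j < n \<Longrightarrow> S ! j < n"
  using schedule nth_mem by (fastforce simp: is_schedule_def)

lemma schedule_nth_eq_iff: "j < n \<Longrightarrow> k < n \<Longrightarrow> S ! j = S ! k \<longleftrightarrow> j = k"
  using schedule by (simp add: is_schedule_def nth_eq_iff_index_eq)

lemma schedule_surj: "v < n \<Longrightarrow> \<exists>j<n. S ! j = v"
  using schedule by (metis is_schedule_def in_set_conv_nth lessThan_iff)

lemma prefix_stabilizer_last: "prefix_stabilizer E n S n = {id}"
proof -
  have "f = id" if "f \<in> prefix_stabilizer E n S n" for f
  proof
    fix v
    show "f v = id v"
    proof (cases "v < n")
      case True
      then show ?thesis
        using that schedule_surj by (auto simp: prefix_stabilizer_def)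
    next
      case False
      then show ?thesis
        using that permutes_not_in[OF aut_permutes] by (auto simp: prefix_stabilizer_def)
    qed
  qed
  then show ?thesis
    using id_in_aut by (auto simp: prefix_stabilizer_def)
qed

lemma restr_set_iff:
  assumes "z < n"
  shows "(S ! z, v) \<in> restr_set E n S \<longleftrightarrow> (\<exists>f \<in> prefix_stabilizer E n S z. f (S ! z) = v \<and> v \<noteq> S ! z)"
  using assms schedule_nth_eq_iff by (auto simp: restr_set_def prefix_stabilizer_def)

lemma restr_set_index_less:
  assumes "z < n" "k < n" "(S ! z, S ! k) \<in> restr_set E n S"
  shows "z < k"
proof (rule ccontr)
  assume "\<not> z < k"
  obtain f where f: "f \<in> prefix_stabilizer E n S z" "f (S ! z) = S ! k" "S ! k \<noteq> S ! z"
    using assms restr_set_iff by blast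
  then have "k < z" using \<open>\<not> z < k\<close> by (cases "k = z") auto
  then have "f (S ! k) = f (S ! z)" using f by (simp add: prefix_stabilizer_def)
  then show False
    using f prefix_stabilizer_bij bij_is_inj by (metis inj_eq)
qed

lemma
  assumes "has_c E n S k"
  shows cidx_less_index: "cidx E n S k < k"
    and cidx_restr_set: "(S ! cidx E n S k, S ! k) \<in> restr_set E n S"
    and cidx_maximal: "z < n \<Longrightarrow> (S ! z, S ! k) \<in> restr_set E n S \<Longrightarrow> z \<le> cidx E n S k"
proof -
  let ?Z = "{z. z < n \<and> (S ! z, S ! k) \<in> restr_set E n S}"
  have "k < n" "?Z \<noteq> {}" using assms by (auto simp: has_c_def)
  then have "cidx E n S k \<in> ?Z" unfolding cidx_def by (intro Max_in) auto
  then show "(S ! cidx E n S k, S ! k) \<in> restr_set E n S" and "cidx E n S k < k"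
    using restr_set_index_less \<open>k < n\<close> by auto
  show "z < n \<Longrightarrow> (S ! z, S ! k) \<in> restr_set E n S \<Longrightarrow> z \<le> cidx E n S k"
    unfolding cidx_def by (intro Max_ge) auto
qed

lemma decreasing_parent_cidx: "decreasing_parent (has_c E n S) (cidx E n S)"
  by unfold_locales (rule cidx_less_index)

lemma cparent_eq_parent_rel: "cparent E n S = decreasing_parent.parent_rel (has_c E n S) (cidx E n S)"
  by (simp add: cparent_def decreasing_parent.parent_rel_def[OF decreasing_parent_cidx])

lemma descendant_in_orbit:
  assumes "(i, k) \<in> (cparent E n S)\<^sup>*" "i < n"
  shows "S ! k \<in> (\<lambda>f. f (S ! i)) ` prefix_stabilizer E n S i"
  using assms(1)
proof (induction rule: rtrancl_induct)
  case base
  show ?case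
    by (rule image_eqI[of _ _ id]) (simp_all add: prefix_stabilizer_def id_in_aut)
next
  case (step j k)
  then have "has_c E n S k" and j: "j = cidx E n S k" by (auto simp: cparent_def)
  then have "j < n" using cidx_less_index has_c_def by fastforce
  obtain f where f: "f \<in> prefix_stabilizer E n S j" "f (S ! j) = S ! k"
    using cidx_restr_set[OF \<open>has_c E n S k\<close>] restr_set_iff[OF \<open>j < n\<close>] j by blast
  obtain g where g: "g \<in> prefix_stabilizer E n S i" "g (S ! i) = S ! j"
    using step.IH by (metis imageE)
  have "i \<le> j"
    using step.hyps(1) decreasing_parent.descendant_le[OF decreasing_parent_cidx]
    by (simp add: cparent_eq_parent_rel)
  then have "f \<circ> g \<in> prefix_stabilizer E n S i"
    using f(1) g(1) prefix_stabilizer_antimono prefix_stabilizer_compose by blast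
  then show ?case
    using f(2) g(2) by (intro image_eqI[of _ _ "f \<circ> g"]) simp_all
qed

text \<open>If \<open>g\<close> fixes the prefix before \<open>i\<close> and moves \<open>S ! i\<close> to \<open>S ! k\<close>, then \<open>c\<^sub>k \<ge> i\<close>,
  and composing \<open>g\<close> with the inverse of a witness for \<open>(S ! c\<^sub>k, S ! k) \<in> L\<close> moves \<open>S ! i\<close>
  to \<open>S ! c\<^sub>k\<close>; induction on \<open>k\<close> climbs the parent chain back to \<open>i\<close>.\<close>
lemma orbit_descendant:
  assumes "k < n" "i < n" "S ! k \<in> (\<lambda>f. f (S ! i)) ` prefix_stabilizer E n S i"
  shows "(i, k) \<in> (cparent E n S)\<^sup>*"
  using assms
proof (induction k rule: less_induct)
  case (less k)
  show ?case
  proof (cases "k = i")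
    case False
    obtain g where g: "g \<in> prefix_stabilizer E n S i" "g (S ! i) = S ! k"
      using less.prems(3) by (metis imageE)
    have "S ! k \<noteq> S ! i" using schedule_nth_eq_iff less.prems False by simp
    then have restr: "(S ! i, S ! k) \<in> restr_set E n S" using restr_set_iff less.prems g by blast
    then have hk: "has_c E n S k" using less.prems by (auto simp: has_c_def)
    define p where "p = cidx E n S k"
    have "i \<le> p" "p < k"
      using cidx_maximal[OF hk _ restr] cidx_less_index[OF hk] less.prems by (auto simp: p_def)
    obtain f where f: "f \<in> prefix_stabilizer E n S p" "f (S ! p) = S ! k"
      using cidx_restr_set[OF hk] restr_set_iff \<open>p < k\<close> less.prems(1) unfolding p_def by fastforce
    then have "f \<in> prefix_stabilizer E n S i"
      using prefix_stabilizer_antimono[OF \<open>i \<le> p\<close>] by blast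
    then have "inv f \<circ> g \<in> prefix_stabilizer E n S i"
      using g(1) prefix_stabilizer_compose prefix_stabilizer_inv by blast
    moreover have "(inv f \<circ> g) (S ! i) = S ! p"
      using f(2) g(2) prefix_stabilizer_bij[OF f(1)] by (simp add: bij_is_inj inv_f_eq)
    ultimately have "S ! p \<in> (\<lambda>f. f (S ! i)) ` prefix_stabilizer E n S i"
      by (intro image_eqI[of _ _ "inv f \<circ> g"]) simp_all
    then have "(i, p) \<in> (cparent E n S)\<^sup>*"
      using less.IH \<open>p < k\<close> less.prems(1,2) by simp
    moreover have "(p, k) \<in> cparent E n S" using hk by (auto simp: cparent_def p_def)
    ultimately show ?thesis by (rule rtrancl_into_rtrancl)
  qed simp
qed

lemma card_orbit_prefix_stabilizer:
  assumes "i < n"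
  shows "card ((\<lambda>f. f (S ! i)) ` prefix_stabilizer E n S i)
           = card {k. k < n \<and> (i, k) \<in> (cparent E n S)\<^sup>*}"
proof -
  have "(\<lambda>f. f (S ! i)) ` prefix_stabilizer E n S i
      = (!) S ` {k. k < n \<and> (i, k) \<in> (cparent E n S)\<^sup>*}"
  proof (intro equalityI subsetI)
    fix v assume v: "v \<in> (\<lambda>f. f (S ! i)) ` prefix_stabilizer E n S i"
    then have "v < n"
      using assms aut_in_range schedule_nth_less by (auto simp: prefix_stabilizer_def)
    then obtain k where "k < n" "S ! k = v" using schedule_surj by blast
    then show "v \<in> (!) S ` {k. k < n \<and> (i, k) \<in> (cparent E n S)\<^sup>*}"
      using orbit_descendant assms v by blast
  qed (use descendant_in_orbit assms in blast)
  moreover have "inj_on ((!) S) {k. k < n \<and> (i, k) \<in> (cparent E n S)\<^sup>*}"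
    by (auto intro: inj_onI simp: schedule_nth_eq_iff)
  ultimately show ?thesis by (simp add: card_image)
qed

lemma card_aut_eq_prod_descendants:
  "card (aut E n) = (\<Prod>i<n. card {k. k < n \<and> (i, k) \<in> (cparent E n S)\<^sup>*})"
proof -
  have "card (aut E n)
      = (\<Prod>j<i. card {k. k < n \<and> (j, k) \<in> (cparent E n S)\<^sup>*}) * card (prefix_stabilizer E n S i)"
    if "i \<le> n" for i
    using that
  proof (induction i)
    case (Suc i)
    then show ?case
      using card_prefix_stabilizer_Suc[of E n S i] card_orbit_prefix_stabilizer[of i] by simp
  qed (simp add: prefix_stabilizer_0)
  from this[of n] show ?thesis by (simp add: prefix_stabilizer_last)
qed

end

theorem mainTheorem5:
  fixes E :: "nat \<Rightarrow> nat \<Rightarrow> bool" and n m :: nat and S :: "nat list"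
  assumes "is_pattern E n" and "is_schedule E n S" and "m < n"
  defines "M \<equiv> PiM {..m} (\<lambda>_. uniform_measure lborel {0<..<(1::real)})"
  shows "measure M {x \<in> space M. \<forall>k\<le>m. has_c E n S k \<longrightarrow> x k < x (cidx E n S k)}
           = (\<Prod>i\<le>m. 1 / real (zcount E n S m i))
      \<and> (m = n - 1 \<longrightarrow>
           measure M {x \<in> space M. \<forall>k\<le>m. has_c E n S k \<longrightarrow> x k < x (cidx E n S k)}
             = 1 / real (card (aut E n)))"
proof -
  interpret decreasing_parent "has_c E n S" "cidx E n S"
    using assms(2) by (rule decreasing_parent_cidx)
  have "M = PiM {..<Suc m} (\<lambda>_. uniform01)"
    by (simp add: M_def lessThan_Suc_atMost)
  then have prob: "measure M {x \<in> space M. \<forall>k\<le>m. has_c E n S k \<longrightarrow> x k < x (cidx E n S k)}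
      = (\<Prod>i\<le>m. 1 / real (zcount E n S m i))"
    using prob_below_parents[of "Suc m"]
    by (simp add: less_Suc_eq_le lessThan_Suc_atMost zcount_def cparent_eq_parent_rel[OF assms(2)])
  moreover have "(\<Prod>i\<le>m. 1 / real (zcount E n S m i)) = 1 / real (card (aut E n))"
    if "m = n - 1"
  proof -
    have "{..<n} = {..m}" "zcount E n S m i = card {k. k < n \<and> (i, k) \<in> (cparent E n S)\<^sup>*}" for i
      using that \<open>m < n\<close> unfolding zcount_def by (auto intro!: arg_cong[where f = card])
    then show ?thesis
      by (simp add: card_aut_eq_prod_descendants[OF assms(2)] prod_dividef)
  qed
  ultimately show ?thesis by metis
qed

end
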